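(* Let $A$ and $B$ be $3$-dimensional boxes with closed side lengths $a_1\le a_2\le a_3$ and $b_1\le b_2\le b_3$, such that both the arrangement with $A$ inside $B$ and the arrangement with $B$ inside $A$ are possible, and suppose $a_1\le b_1$. Then the side lengths satisfy one of the following four chains, where in each chain no two adjacent inequalities are both equalities: Type 1: $a_1\le b_1<a_2\le b_2<a_3\le b_3$; Type 2: $a_1\le b_1<a_2\le b_2\le b_3<a_3$; Type 3: $a_1\le b_1\le b_2<a_2\le a_3\le b_3$; Type 4: $a_1\le b_1\le b_2<a_2<b_3<a_3$.
   Context: A $3$-dimensional box $A$ has closed side lengths $a_1\le a_2\le a_3$ (positive reals). A state of $A$ is either closed or expanded along one side $i$: $a_i$ is replaced by $a_i'$ with $a_i\le a_i'\le 2a_i$, other sides unchanged (only one side can expand). The dimension vector of a state is its side lengths sorted non-decreasingly. A box in some state fits inside another box in some state if each coordinate of the outer one's dimension vector is strictly larger than the corresponding coordinate of the inner one's. The arrangement "$X$ inside $Y$" is possible if $X$ and $Y$ can be given states so that $X$ fits inside $Y$. *)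

theory Defs
  imports Main "HOL.Real"
begin

text \<open>A 3-dimensional box is given by its list of closed side lengths (length 3).
  A state is either closed, or expanded along exactly one side i,
  replacing the i-th side a_i by some a_i' with a_i \<le> a_i' \<le> 2 a_i.\<close>

definition box_states :: "real list \<Rightarrow> real list set" where
  "box_states a = {a} \<union> {a[i := t] | i t. i < length a \<and> a ! i \<le> t \<and> t \<le> 2 * (a ! i)}"

definition dim_vec :: "real list \<Rightarrow> real list" where
  "dim_vec s = sort s"

definition fits_in :: "real list \<Rightarrow> real list \<Rightarrow> bool" where
  "fits_in u v \<longleftrightarrow> length u = length v \<and> (\<forall>i < length u. u ! i < v ! i)"

definition inside_possible :: "real list \<Rightarrow> real list \<Rightarrow> bool" where
  "inside_possible X Y \<longleftrightarrow>
     (\<exists>sX \<in> box_states X. \<exists>sY \<in> box_states Y. fits_in (dim_vec sX) (dim_vec sY))"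

end

theory Submission
  imports Defs
begin

text \<open>Expanding one side of a box with closed sides \<open>x\<^sub>1 \<le> x\<^sub>2 \<le> x\<^sub>3\<close> can only raise
  the sorted side lengths, but it raises the smallest at most to \<open>x\<^sub>2\<close> and the middle
  one at most to \<open>x\<^sub>3\<close>. Hence "X inside Y" forces \<open>x\<^sub>1 < y\<^sub>2\<close> and \<open>x\<^sub>2 < y\<^sub>3\<close>, and
  these inequalities in both directions, together with \<open>a\<^sub>1 \<le> b\<^sub>1\<close>, leave only the
  four types.\<close>

lemma dim_vec_3:
  "dim_vec [x, y, z :: real] =
     [min x (min y z), max (min x y) (min (max x y) z), max x (max y z)]"
  unfolding dim_vec_def by (auto simp: min_def max_def)

lemma box_states_3E:
  assumes "s \<in> box_states [x1, x2, x3]"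
  obtains "s = [x1, x2, x3]"
    | t where "x1 \<le> t" "s = [t, x2, x3]"
    | t where "x2 \<le> t" "s = [x1, t, x3]"
    | t where "x3 \<le> t" "s = [x1, x2, t]"
  using assms unfolding box_states_def by (auto simp: less_Suc_eq numeral_3_eq_3)

lemma fits_in_3:
  "fits_in [p, q, r] [p', q', r'] \<longleftrightarrow> p < p' \<and> q < q' \<and> r < r'"
  by (auto simp: fits_in_def less_Suc_eq numeral_3_eq_3)

lemma dim_vec_box_state:
  assumes "s \<in> box_states [x1, x2, x3]" "x1 \<le> x2" "x2 \<le> x3"
  obtains p q r where "dim_vec s = [p, q, r]"
    "x1 \<le> p" "p \<le> x2" "x2 \<le> q" "q \<le> x3" "x3 \<le> r"
  using assms(1)
proof (cases rule: box_states_3E)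
qed (use assms(2,3) that in \<open>auto simp: dim_vec_3 min_def max_def\<close>)

lemma inside_possible_3_imp:
  assumes "inside_possible [x1, x2, x3] [y1, y2, y3]"
    and "x1 \<le> x2" "x2 \<le> x3" "y1 \<le> y2" "y2 \<le> y3"
  shows "x1 < y2" "x2 < y3"
proof -
  obtain sX sY where sX: "sX \<in> box_states [x1, x2, x3]"
    and sY: "sY \<in> box_states [y1, y2, y3]"
    and fits: "fits_in (dim_vec sX) (dim_vec sY)"
    using assms(1) unfolding inside_possible_def by blast
  obtain p q r where X: "dim_vec sX = [p, q, r]" "x1 \<le> p" "x2 \<le> q"
    using dim_vec_box_state[OF sX assms(2,3)] by metis
  obtain p' q' r' where Y: "dim_vec sY = [p', q', r']" "p' \<le> y2" "q' \<le> y3"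
    using dim_vec_box_state[OF sY assms(4,5)] by metis
  have "p < p'" "q < q'"
    using fits unfolding X Y fits_in_3 by auto
  then show "x1 < y2" "x2 < y3"
    using X Y by auto
qed

theorem theorem29:
  fixes a1 a2 a3 b1 b2 b3 :: real
  assumes "0 < a1" "a1 \<le> a2" "a2 \<le> a3"
    and "0 < b1" "b1 \<le> b2" "b2 \<le> b3"
    and "inside_possible [a1, a2, a3] [b1, b2, b3]"
    and "inside_possible [b1, b2, b3] [a1, a2, a3]"
    and "a1 \<le> b1"
  shows "(a1 \<le> b1 \<and> b1 < a2 \<and> a2 \<le> b2 \<and> b2 < a3 \<and> a3 \<le> b3)
       \<or> (a1 \<le> b1 \<and> b1 < a2 \<and> a2 \<le> b2 \<and> b2 \<le> b3 \<and> b3 < a3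
          \<and> \<not> (a2 = b2 \<and> b2 = b3))
       \<or> (a1 \<le> b1 \<and> b1 \<le> b2 \<and> b2 < a2 \<and> a2 \<le> a3 \<and> a3 \<le> b3
          \<and> \<not> (a1 = b1 \<and> b1 = b2) \<and> \<not> (a2 = a3 \<and> a3 = b3))
       \<or> (a1 \<le> b1 \<and> b1 \<le> b2 \<and> b2 < a2 \<and> a2 < b3 \<and> b3 < a3
          \<and> \<not> (a1 = b1 \<and> b1 = b2))"
proof -
  have "a1 < b2" "a2 < b3"
    using inside_possible_3_imp[OF assms(7) assms(2,3,5,6)] by auto
  moreover have "b1 < a2" "b2 < a3"
    using inside_possible_3_imp[OF assms(8) assms(5,6,2,3)] by auto
  ultimately show ?thesis
    using assms(2,3,5,6,9) by linarith
qed

end
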